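(* Let $\Lambda$ be a row-finite $k$-graph with no sources, and let $\{t_\lambda\}_{\lambda\in\Lambda}$ be a permutative representation of $C^*(\Lambda)$ on $\mathcal H$ with permuted orthonormal basis $\{e_i\}_{i\in I}$, bijections $\tilde\sigma_\lambda:J_\lambda\to K_\lambda$, coding maps $\tilde\sigma^n:I\to I$, and encoding map $E:I\to\Lambda^\infty$. If $E$ is injective, then, setting $\Omega:=E(I)\subseteq\Lambda^\infty$, we have $E^{-1}\circ\sigma_\lambda\circ E(i)=\tilde\sigma_\lambda(i)$ for all $\lambda\in\Lambda$ and $i\in J_\lambda$, and $E^{-1}\circ\sigma^n\circ E(i)=\tilde\sigma^n(i)$ for all $n\in\mathbb N^k$ and $i\in I$; i.e. $I$ is identified with $\Omega$ and the maps $\tilde\sigma_\lambda,\tilde\sigma^n$ with the prefixing and shift maps restricted to $\Omega$.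
   Context: A $k$-graph ($k\ge1$) is a countable small category $\Lambda$ with a functor $d:\Lambda\to\mathbb N^k$ satisfying unique factorization: if $d(\lambda)=m+n$ there are unique $\mu,\nu$ with $\lambda=\mu\nu$, $d(\mu)=m$, $d(\nu)=n$. $\Lambda^0$ = vertices, $r,s$ = range, source, $\Lambda^n=d^{-1}(n)$, $v\Lambda^n=\{\lambda\in\Lambda^n:r(\lambda)=v\}$, $s(\lambda)\Lambda=\{\nu:r(\nu)=s(\lambda)\}$; row-finite: each $v\Lambda^n$ finite; no sources: each $v\Lambda^n$ nonempty. Infinite paths are degree-preserving functors $x:\Omega_k\to\Lambda$, where $\Omega_k$ has objects $\mathbb N^k$, morphisms $(p,q)$, $p\le q$, $d(p,q)=q-p$; $\Lambda^\infty$ is their set, $r(x)=x(0,0)$. Shift: $\sigma^m(x)(p,q)=x(p+m,q+m)$. Prefixing: for $r(x)=s(\lambda)$, $\sigma_\lambda(x)$ is the unique $y$ with $y(0,d(\lambda))=\lambda$, $\sigma^{d(\lambda)}(y)=x$. A representation of $C^*(\Lambda)$ is a family of partial isometries $\{t_\lambda\}$ satisfying (CK1)–(CK4): $\{t_v\}$ mutually orthogonal projections; $t_\lambda t_\eta=t_{\lambda\eta}$ when $s(\lambda)=r(\eta)$; $t_\lambda^*t_\lambda=t_{s(\lambda)}$; $t_v=\sum_{\lambda\in v\Lambda^n}t_\lambda t_\lambda^*$. It is permutative if there is an orthonormal basis $\{e_i\}_{i\in I}$ and, for each $\lambda$, sets $J_\lambda,K_\lambda\subseteq I$ and a bijection $\tilde\sigma_\lambda:J_\lambda\to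 K_\lambda$ with: (a) $\bigcup_{\lambda\in\Lambda^n}J_\lambda=\bigcup_{\lambda\in\Lambda^n}K_\lambda=I$ for each $n$; (b) $K_\nu\subseteq J_\lambda$ and $\tilde\sigma_\lambda\circ\tilde\sigma_\nu=\tilde\sigma_{\lambda\nu}$ for $\nu\in s(\lambda)\Lambda$; (c) $t_\lambda e_i=e_{\tilde\sigma_\lambda(i)}$ for $i\in J_\lambda$, $0$ otherwise; (d) $t_\lambda^*e_{\tilde\sigma_\lambda(i)}=e_i$ for $i\in J_\lambda$, and $t_\lambda^*e_j=0$ for $j\in K_{\lambda'}$, $\lambda'\ne\lambda$, $d(\lambda')=d(\lambda)$. Then for each $n$ the $K_\lambda$, $\lambda\in\Lambda^n$, partition $I$; the encoding map $E:I\to\Lambda^\infty$ is given by $E(i)(0,n)=$ the unique $\lambda\in\Lambda^n$ with $i\in K_\lambda$; and the coding map $\tilde\sigma^n:I\to I$ sends $i\in K_\lambda$ ($\lambda\in\Lambda^n$) to the unique $i_n\in J_\lambda$ with $\tilde\sigma_\lambda(i_n)=i$. *)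

theory Defs
  imports Complex_Main "HOL-Library.Countable_Set"
begin

text \<open>A k-graph is encoded by: a set of objects V, a set of morphisms L, range and
source maps r s, identities ident, (partial) composition cmp (meaningful when
s lam = r mu), and degree functor d into N^k, where N^k is represented as
functions 'k => nat for a finite nonempty type 'k (so k = CARD('k) >= 1).
The order on N^k is the pointwise order (le_fun).\<close>

definition kgraph ::
  "'v set \<Rightarrow> 'a set \<Rightarrow> ('a \<Rightarrow> 'v) \<Rightarrow> ('a \<Rightarrow> 'v) \<Rightarrow> ('v \<Rightarrow> 'a)
   \<Rightarrow> ('a \<Rightarrow> 'a \<Rightarrow> 'a) \<Rightarrow> ('a \<Rightarrow> ('k::finite \<Rightarrow> nat)) \<Rightarrow> bool" where
  "kgraph V L r s ident cmp d \<longleftrightarrow>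
     countable V \<and> countable L \<and>
     (\<forall>lam\<in>L. r lam \<in> V \<and> s lam \<in> V) \<and>
     (\<forall>v\<in>V. ident v \<in> L \<and> r (ident v) = v \<and> s (ident v) = v) \<and>
     (\<forall>lam\<in>L. cmp (ident (r lam)) lam = lam \<and> cmp lam (ident (s lam)) = lam) \<and>
     (\<forall>lam\<in>L. \<forall>mu\<in>L. s lam = r mu \<longrightarrow>
         cmp lam mu \<in> L \<and> r (cmp lam mu) = r lam \<and> s (cmp lam mu) = s mu) \<and>
     (\<forall>lam\<in>L. \<forall>mu\<in>L. \<forall>nu\<in>L. s lam = r mu \<and> s mu = r nu \<longrightarrow>
         cmp (cmp lam mu) nu = cmp lam (cmp mu nu)) \<and>
     (\<forall>v\<in>V. d (ident v) = (\<lambda>_. 0)) \<and>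
     (\<forall>lam\<in>L. \<forall>mu\<in>L. s lam = r mu \<longrightarrow> d (cmp lam mu) = (\<lambda>j. d lam j + d mu j)) \<and>
     (\<forall>lam\<in>L. \<forall>m n. d lam = (\<lambda>j. m j + n j) \<longrightarrow>
         (\<exists>mu nu. mu \<in> L \<and> nu \<in> L \<and> s mu = r nu \<and> lam = cmp mu nu \<and> d mu = m \<and> d nu = n \<and>
            (\<forall>mu' nu'. mu' \<in> L \<and> nu' \<in> L \<and> s mu' = r nu' \<and> lam = cmp mu' nu' \<and>
                 d mu' = m \<and> d nu' = n \<longrightarrow> mu' = mu \<and> nu' = nu)))"

definition row_finite ::
  "'v set \<Rightarrow> 'a set \<Rightarrow> ('a \<Rightarrow> 'v) \<Rightarrow> ('a \<Rightarrow> ('k::finite \<Rightarrow> nat)) \<Rightarrow> bool" where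
  "row_finite V L r d \<longleftrightarrow> (\<forall>v\<in>V. \<forall>n. finite {lam\<in>L. r lam = v \<and> d lam = n})"

definition no_sources ::
  "'v set \<Rightarrow> 'a set \<Rightarrow> ('a \<Rightarrow> 'v) \<Rightarrow> ('a \<Rightarrow> ('k::finite \<Rightarrow> nat)) \<Rightarrow> bool" where
  "no_sources V L r d \<longleftrightarrow> (\<forall>v\<in>V. \<forall>n. {lam\<in>L. r lam = v \<and> d lam = n} \<noteq> {})"

text \<open>Infinite paths: degree preserving functors Omega_k -> Lambda, given by their
action x p q on the morphisms (p,q), p <= q, of Omega_k (object p goes to the
vertex r (x p p)). Outside the domain p <= q the value is fixed to undefined,
so that equality of paths is equality of functors.\<close>

definition inf_paths ::
  "'a set \<Rightarrow> ('a \<Rightarrow> 'v) \<Rightarrow> ('a \<Rightarrow> 'v) \<Rightarrow> ('v \<Rightarrow> 'a) \<Rightarrow> ('a \<Rightarrow> 'a \<Rightarrow> 'a)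
   \<Rightarrow> ('a \<Rightarrow> ('k::finite \<Rightarrow> nat)) \<Rightarrow> (('k \<Rightarrow> nat) \<Rightarrow> ('k \<Rightarrow> nat) \<Rightarrow> 'a) set" where
  "inf_paths L r s ident cmp d =
    {x. (\<forall>p q. p \<le> q \<longrightarrow> x p q \<in> L \<and> d (x p q) = (\<lambda>j. q j - p j)) \<and>
        (\<forall>p. x p p = ident (r (x p p))) \<and>
        (\<forall>p q w. p \<le> q \<and> q \<le> w \<longrightarrow> s (x p q) = r (x q w) \<and> x p w = cmp (x p q) (x q w)) \<and>
        (\<forall>p q. \<not> p \<le> q \<longrightarrow> x p q = undefined)}"

definition path_shift ::
  "('k::finite \<Rightarrow> nat) \<Rightarrow> (('k \<Rightarrow> nat) \<Rightarrow> ('k \<Rightarrow> nat) \<Rightarrow> 'a) \<Rightarrow> (('k \<Rightarrow> nat) \<Rightarrow> ('k \<Rightarrow> nat) \<Rightarrow> 'a)" where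
  "path_shift m x = (\<lambda>p q. if p \<le> q then x (\<lambda>j. p j + m j) (\<lambda>j. q j + m j) else undefined)"

definition path_prefix ::
  "'a set \<Rightarrow> ('a \<Rightarrow> 'v) \<Rightarrow> ('a \<Rightarrow> 'v) \<Rightarrow> ('v \<Rightarrow> 'a) \<Rightarrow> ('a \<Rightarrow> 'a \<Rightarrow> 'a)
   \<Rightarrow> ('a \<Rightarrow> ('k::finite \<Rightarrow> nat)) \<Rightarrow> 'a \<Rightarrow> (('k \<Rightarrow> nat) \<Rightarrow> ('k \<Rightarrow> nat) \<Rightarrow> 'a)
   \<Rightarrow> (('k \<Rightarrow> nat) \<Rightarrow> ('k \<Rightarrow> nat) \<Rightarrow> 'a)" where
  "path_prefix L r s ident cmp d lam x =
    (THE y. y \<in> inf_paths L r s ident cmp d \<and> y (\<lambda>_. 0) (d lam) = lam \<and> path_shift (d lam) y = x)"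

definition hnorm :: "('h \<Rightarrow> 'h \<Rightarrow> complex) \<Rightarrow> 'h \<Rightarrow> real" where
  "hnorm ip x = sqrt (Re (ip x x))"

definition complex_hilbert_space ::
  "(complex \<Rightarrow> 'h::ab_group_add \<Rightarrow> 'h) \<Rightarrow> ('h \<Rightarrow> 'h \<Rightarrow> complex) \<Rightarrow> bool" where
  "complex_hilbert_space sc ip \<longleftrightarrow>
     (\<forall>a x y. sc a (x + y) = sc a x + sc a y) \<and>
     (\<forall>a b x. sc (a + b) x = sc a x + sc b x) \<and>
     (\<forall>a b x. sc a (sc b x) = sc (a * b) x) \<and>
     (\<forall>x. sc 1 x = x) \<and>
     (\<forall>x y z. ip (x + y) z = ip x z + ip y z) \<and>
     (\<forall>a x y. ip (sc a x) y = a * ip x y) \<and>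
     (\<forall>x y. ip x y = cnj (ip y x)) \<and>
     (\<forall>x. Im (ip x x) = 0 \<and> Re (ip x x) \<ge> 0) \<and>
     (\<forall>x. ip x x = 0 \<longrightarrow> x = 0) \<and>
     (\<forall>X :: nat \<Rightarrow> 'h.
        (\<forall>\<epsilon>>0. \<exists>N. \<forall>m\<ge>N. \<forall>n\<ge>N. hnorm ip (X m - X n) < \<epsilon>) \<longrightarrow>
        (\<exists>y. \<forall>\<epsilon>>0. \<exists>N. \<forall>n\<ge>N. hnorm ip (X n - y) < \<epsilon>))"

definition orthonormal_basis ::
  "('h::ab_group_add \<Rightarrow> 'h \<Rightarrow> complex) \<Rightarrow> 'i set \<Rightarrow> ('i \<Rightarrow> 'h) \<Rightarrow> bool" where
  "orthonormal_basis ip I e \<longleftrightarrow>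
     (\<forall>i\<in>I. \<forall>j\<in>I. ip (e i) (e j) = (if i = j then 1 else 0)) \<and>
     (\<forall>x. (\<forall>i\<in>I. ip x (e i) = 0) \<longrightarrow> x = 0)"

definition bounded_op ::
  "(complex \<Rightarrow> 'h::ab_group_add \<Rightarrow> 'h) \<Rightarrow> ('h \<Rightarrow> 'h \<Rightarrow> complex) \<Rightarrow> ('h \<Rightarrow> 'h) \<Rightarrow> bool" where
  "bounded_op sc ip T \<longleftrightarrow>
     (\<forall>x y. T (x + y) = T x + T y) \<and> (\<forall>a x. T (sc a x) = sc a (T x)) \<and>
     (\<exists>C. \<forall>x. hnorm ip (T x) \<le> C * hnorm ip x)"

definition is_adjoint :: "('h \<Rightarrow> 'h \<Rightarrow> complex) \<Rightarrow> ('h \<Rightarrow> 'h) \<Rightarrow> ('h \<Rightarrow> 'h) \<Rightarrow> bool" where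
  "is_adjoint ip T Ts \<longleftrightarrow> (\<forall>x y. ip (T x) y = ip x (Ts y))"

definition partial_isometry ::
  "(complex \<Rightarrow> 'h::ab_group_add \<Rightarrow> 'h) \<Rightarrow> ('h \<Rightarrow> 'h \<Rightarrow> complex) \<Rightarrow> ('h \<Rightarrow> 'h) \<Rightarrow> ('h \<Rightarrow> 'h) \<Rightarrow> bool" where
  "partial_isometry sc ip T Ts \<longleftrightarrow>
     bounded_op sc ip T \<and> is_adjoint ip T Ts \<and> (\<forall>x. T (Ts (T x)) = T x)"

text \<open>t lam is the operator t_lambda and ta lam its adjoint t_lambda^*;
t_v is t (ident v).\<close>

definition ck_rep ::
  "'v set \<Rightarrow> 'a set \<Rightarrow> ('a \<Rightarrow> 'v) \<Rightarrow> ('a \<Rightarrow> 'v) \<Rightarrow> ('v \<Rightarrow> 'a) \<Rightarrow> ('a \<Rightarrow> 'a \<Rightarrow> 'a)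
   \<Rightarrow> ('a \<Rightarrow> ('k::finite \<Rightarrow> nat))
   \<Rightarrow> (complex \<Rightarrow> 'h::ab_group_add \<Rightarrow> 'h) \<Rightarrow> ('h \<Rightarrow> 'h \<Rightarrow> complex)
   \<Rightarrow> ('a \<Rightarrow> 'h \<Rightarrow> 'h) \<Rightarrow> ('a \<Rightarrow> 'h \<Rightarrow> 'h) \<Rightarrow> bool" where
  "ck_rep V L r s ident cmp d sc ip t ta \<longleftrightarrow>
     (\<forall>lam\<in>L. partial_isometry sc ip (t lam) (ta lam)) \<and>
     \<comment> \<open>(CK1)\<close>
     (\<forall>v\<in>V. (\<forall>x. t (ident v) (t (ident v) x) = t (ident v) x) \<and> ta (ident v) = t (ident v)) \<and>
     (\<forall>v\<in>V. \<forall>w\<in>V. v \<noteq> w \<longrightarrow> (\<forall>x. t (ident v) (t (ident w) x) = 0)) \<and>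
     \<comment> \<open>(CK2)\<close>
     (\<forall>lam\<in>L. \<forall>eta\<in>L. s lam = r eta \<longrightarrow> (\<forall>x. t lam (t eta x) = t (cmp lam eta) x)) \<and>
     \<comment> \<open>(CK3)\<close>
     (\<forall>lam\<in>L. \<forall>x. ta lam (t lam x) = t (ident (s lam)) x) \<and>
     \<comment> \<open>(CK4)\<close>
     (\<forall>v\<in>V. \<forall>n. \<forall>x. t (ident v) x = (\<Sum>lam\<in>{lam\<in>L. r lam = v \<and> d lam = n}. t lam (ta lam x)))"

definition permutative ::
  "'a set \<Rightarrow> ('a \<Rightarrow> 'v) \<Rightarrow> ('a \<Rightarrow> 'v) \<Rightarrow> ('a \<Rightarrow> 'a \<Rightarrow> 'a) \<Rightarrow> ('a \<Rightarrow> ('k::finite \<Rightarrow> nat))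
   \<Rightarrow> ('h::ab_group_add \<Rightarrow> 'h \<Rightarrow> complex)
   \<Rightarrow> ('a \<Rightarrow> 'h \<Rightarrow> 'h) \<Rightarrow> ('a \<Rightarrow> 'h \<Rightarrow> 'h)
   \<Rightarrow> 'i set \<Rightarrow> ('i \<Rightarrow> 'h) \<Rightarrow> ('a \<Rightarrow> 'i set) \<Rightarrow> ('a \<Rightarrow> 'i set) \<Rightarrow> ('a \<Rightarrow> 'i \<Rightarrow> 'i) \<Rightarrow> bool" where
  "permutative L r s cmp d ip t ta I e J K sig \<longleftrightarrow>
     orthonormal_basis ip I e \<and>
     (\<forall>lam\<in>L. J lam \<subseteq> I \<and> K lam \<subseteq> I \<and> bij_betw (sig lam) (J lam) (K lam)) \<and>
     \<comment> \<open>(a)\<close>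
     (\<forall>n. (\<Union>lam\<in>{lam\<in>L. d lam = n}. J lam) = I \<and> (\<Union>lam\<in>{lam\<in>L. d lam = n}. K lam) = I) \<and>
     \<comment> \<open>(b): sig lam o sig nu = sig (lam nu) as partial maps\<close>
     (\<forall>lam\<in>L. \<forall>nu\<in>L. s lam = r nu \<longrightarrow>
         K nu \<subseteq> J lam \<and> J (cmp lam nu) = J nu \<and>
         (\<forall>i\<in>J nu. sig lam (sig nu i) = sig (cmp lam nu) i)) \<and>
     \<comment> \<open>(c)\<close>
     (\<forall>lam\<in>L. (\<forall>i\<in>J lam. t lam (e i) = e (sig lam i)) \<and> (\<forall>i\<in>I - J lam. t lam (e i) = 0)) \<and>
     \<comment> \<open>(d)\<close>
     (\<forall>lam\<in>L. (\<forall>i\<in>J lam. ta lam (e (sig lam i)) = e i) \<and>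
        (\<forall>lam'\<in>L. lam' \<noteq> lam \<and> d lam' = d lam \<longrightarrow> (\<forall>j\<in>K lam'. ta lam (e j) = 0)))"

definition encoding ::
  "'a set \<Rightarrow> ('a \<Rightarrow> 'v) \<Rightarrow> ('a \<Rightarrow> 'v) \<Rightarrow> ('v \<Rightarrow> 'a) \<Rightarrow> ('a \<Rightarrow> 'a \<Rightarrow> 'a)
   \<Rightarrow> ('a \<Rightarrow> ('k::finite \<Rightarrow> nat)) \<Rightarrow> ('a \<Rightarrow> 'i set) \<Rightarrow> 'i
   \<Rightarrow> (('k \<Rightarrow> nat) \<Rightarrow> ('k \<Rightarrow> nat) \<Rightarrow> 'a)" where
  "encoding L r s ident cmp d K i =
    (THE x. x \<in> inf_paths L r s ident cmp d \<and>
       (\<forall>n. x (\<lambda>_. 0) n = (THE lam. lam \<in> L \<and> d lam = n \<and> i \<in> K lam)))"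

definition coding ::
  "'a set \<Rightarrow> ('a \<Rightarrow> ('k::finite \<Rightarrow> nat)) \<Rightarrow> ('a \<Rightarrow> 'i set) \<Rightarrow> ('a \<Rightarrow> 'i set) \<Rightarrow> ('a \<Rightarrow> 'i \<Rightarrow> 'i)
   \<Rightarrow> ('k \<Rightarrow> nat) \<Rightarrow> 'i \<Rightarrow> 'i" where
  "coding L d J K sig n i =
    (let lam = (THE lam. lam \<in> L \<and> d lam = n \<and> i \<in> K lam) in
       THE i'. i' \<in> J lam \<and> sig lam i' = i)"

end

theory Submission
  imports Defs
begin

text \<open>Condition (d) together with orthonormality makes the sets K lam, lam of a fixed degree n,
pairwise disjoint, and by (a) they cover I; so every index i determines one path of each degree n,
and (b) shows that these paths are the initial segments of a single infinite path E(i).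
Since the coding maps sig lam compose like the morphisms of the k-graph, E intertwines
sig lam with prefixing by lam, and the coding maps with the shifts. Injectivity of E then lets us
pull these identities back to I.\<close>

lemma const_zero_le: "(\<lambda>_. 0::nat) \<le> p"
  by (simp add: le_fun_def)

locale k_graph =
  fixes V :: "'v set" and L :: "'a set" and r s :: "'a \<Rightarrow> 'v" and ident :: "'v \<Rightarrow> 'a"
    and cmp :: "'a \<Rightarrow> 'a \<Rightarrow> 'a" and d :: "'a \<Rightarrow> ('k::finite \<Rightarrow> nat)"
  assumes kgraph: "kgraph V L r s ident cmp d"
begin

lemma range_source_in: "lam \<in> L \<Longrightarrow> r lam \<in> V \<and> s lam \<in> V"
  using kgraph by (simp add: kgraph_def)

lemma ident_props: "v \<in> V \<Longrightarrow> ident v \<in> L \<and> r (ident v) = v \<and> s (ident v) = v \<and> d (ident v) = (\<lambda>_. 0)"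
  using kgraph by (simp add: kgraph_def)

lemma cmp_ident: "lam \<in> L \<Longrightarrow> cmp (ident (r lam)) lam = lam \<and> cmp lam (ident (s lam)) = lam"
  using kgraph by (simp add: kgraph_def)

lemma cmp_props:
  "lam \<in> L \<Longrightarrow> mu \<in> L \<Longrightarrow> s lam = r mu \<Longrightarrow>
   cmp lam mu \<in> L \<and> r (cmp lam mu) = r lam \<and> s (cmp lam mu) = s mu \<and>
   d (cmp lam mu) = (\<lambda>j. d lam j + d mu j)"
  using kgraph by (simp add: kgraph_def)

lemma cmp_assoc:
  "lam \<in> L \<Longrightarrow> mu \<in> L \<Longrightarrow> nu \<in> L \<Longrightarrow> s lam = r mu \<Longrightarrow> s mu = r nu \<Longrightarrow>
   cmp (cmp lam mu) nu = cmp lam (cmp mu nu)"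
  using kgraph by (simp add: kgraph_def)

lemma unique_factorisation:
  "lam \<in> L \<Longrightarrow> d lam = (\<lambda>j. m j + n j) \<Longrightarrow>
   \<exists>mu nu. mu \<in> L \<and> nu \<in> L \<and> s mu = r nu \<and> lam = cmp mu nu \<and> d mu = m \<and> d nu = n \<and>
     (\<forall>mu' nu'. mu' \<in> L \<and> nu' \<in> L \<and> s mu' = r nu' \<and> lam = cmp mu' nu' \<and> d mu' = m \<and> d nu' = n
        \<longrightarrow> mu' = mu \<and> nu' = nu)"
  using kgraph by (simp add: kgraph_def)

lemma factorisation_exists:
  "lam \<in> L \<Longrightarrow> d lam = (\<lambda>j. m j + n j) \<Longrightarrow>
   \<exists>mu nu. mu \<in> L \<and> nu \<in> L \<and> s mu = r nu \<and> lam = cmp mu nu \<and> d mu = m \<and> d nu = n"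
  using unique_factorisation by blast

lemma factorisation_unique:
  assumes "mu \<in> L" "nu \<in> L" "mu' \<in> L" "nu' \<in> L" "s mu = r nu" "s mu' = r nu'"
    and "cmp mu nu = cmp mu' nu'" "d mu = d mu'" "d nu = d nu'"
  shows "mu = mu' \<and> nu = nu'"
proof -
  have "cmp mu nu \<in> L" "d (cmp mu nu) = (\<lambda>j. d mu j + d nu j)"
    using cmp_props assms by auto
  from unique_factorisation[OF this] show ?thesis
    using assms by metis
qed

abbreviation paths where "paths \<equiv> inf_paths L r s ident cmp d"

lemma inf_path_segment: "x \<in> paths \<Longrightarrow> p \<le> q \<Longrightarrow> x p q \<in> L \<and> d (x p q) = (\<lambda>j. q j - p j)"
  unfolding inf_paths_def by blast

lemma inf_path_cmp:
  "x \<in> paths \<Longrightarrow> p \<le> q \<Longrightarrow> q \<le> w \<Longrightarrow> s (x p q) = r (x q w) \<and> x p w = cmp (x p q) (x q w)"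
  unfolding inf_paths_def by blast

lemma inf_path_undefined: "x \<in> paths \<Longrightarrow> \<not> p \<le> q \<Longrightarrow> x p q = undefined"
  unfolding inf_paths_def by blast

lemma inf_paths_eqI:
  assumes x: "x \<in> paths" and y: "y \<in> paths" and eq: "\<And>n. x (\<lambda>_. 0) n = y (\<lambda>_. 0) n"
  shows "x = y"
proof (intro ext)
  fix p q
  show "x p q = y p q"
  proof (cases "p \<le> q")
    case True
    show ?thesis
      using factorisation_unique[of "x (\<lambda>_. 0) p" "x p q" "y (\<lambda>_. 0) p" "y p q"]
        inf_path_cmp[OF x const_zero_le True] inf_path_cmp[OF y const_zero_le True] eq[of p] eq[of q]
        inf_path_segment[OF x const_zero_le] inf_path_segment[OF y const_zero_le]
        inf_path_segment[OF x True] inf_path_segment[OF y True]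
      by auto
  next
    case False
    then show ?thesis using inf_path_undefined x y by metis
  qed
qed

lemma path_shift_in_paths:
  assumes x: "x \<in> paths"
  shows "path_shift m x \<in> paths"
proof -
  have le: "p \<le> q \<Longrightarrow> (\<lambda>j. p j + m j) \<le> (\<lambda>j. q j + m j)" for p q :: "'k \<Rightarrow> nat"
    by (simp add: le_fun_def)
  show ?thesis
    unfolding inf_paths_def mem_Collect_eq
  proof (intro conjI allI impI)
    fix p q :: "'k \<Rightarrow> nat" assume pq: "p \<le> q"
    show "path_shift m x p q \<in> L" "d (path_shift m x p q) = (\<lambda>j. q j - p j)"
      using inf_path_segment[OF x le[OF pq]] pq by (simp_all add: path_shift_def)
  next
    fix p :: "'k \<Rightarrow> nat"
    show "path_shift m x p p = ident (r (path_shift m x p p))"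
      using x unfolding path_shift_def inf_paths_def by simp
  next
    fix p q w :: "'k \<Rightarrow> nat" assume "p \<le> q \<and> q \<le> w"
    then have pq: "p \<le> q" and qw: "q \<le> w" and pw: "p \<le> w" by auto
    show "s (path_shift m x p q) = r (path_shift m x q w)"
      "path_shift m x p w = cmp (path_shift m x p q) (path_shift m x q w)"
      using inf_path_cmp[OF x le[OF pq] le[OF qw]] pq qw pw by (simp_all add: path_shift_def)
  next
    fix p q :: "'k \<Rightarrow> nat" assume "\<not> p \<le> q"
    then show "path_shift m x p q = undefined" by (simp add: path_shift_def)
  qed
qed

lemma inf_paths_eq_if_prefix_shift_eq:
  assumes y: "y \<in> paths" and y': "y' \<in> paths"
    and prefix: "y (\<lambda>_. 0) m = y' (\<lambda>_. 0) m" and shift: "path_shift m y = path_shift m y'"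
  shows "y = y'"
proof (rule inf_paths_eqI[OF y y'])
  fix n
  let ?w = "\<lambda>j. n j + m j"
  have m_w: "m \<le> ?w" and n_w: "n \<le> ?w" by (auto simp: le_fun_def)
  have "y m ?w = y' m ?w"
    using fun_cong[OF fun_cong[OF shift, of "\<lambda>_. 0"], of n] by (simp add: path_shift_def const_zero_le)
  then have "y (\<lambda>_. 0) ?w = y' (\<lambda>_. 0) ?w"
    using inf_path_cmp[OF y const_zero_le m_w] inf_path_cmp[OF y' const_zero_le m_w] prefix by simp
  then show "y (\<lambda>_. 0) n = y' (\<lambda>_. 0) n"
    using factorisation_unique[of "y (\<lambda>_. 0) n" "y n ?w" "y' (\<lambda>_. 0) n" "y' n ?w"]
      inf_path_cmp[OF y const_zero_le n_w] inf_path_cmp[OF y' const_zero_le n_w]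
      inf_path_segment[OF y const_zero_le] inf_path_segment[OF y' const_zero_le]
      inf_path_segment[OF y n_w] inf_path_segment[OF y' n_w]
    by auto
qed

lemma path_prefix_eqI:
  assumes "y \<in> paths" "y (\<lambda>_. 0) (d lam) = lam" "path_shift (d lam) y = x"
  shows "path_prefix L r s ident cmp d lam x = y"
  unfolding path_prefix_def
  by (rule the_equality) (use assms inf_paths_eq_if_prefix_shift_eq in metis)+

end

lemma complex_hilbert_space_ip_zero:
  assumes "complex_hilbert_space sc ip"
  shows "ip 0 0 = 0"
proof -
  have "ip (0 + 0) 0 = ip 0 0 + ip 0 0"
    using assms unfolding complex_hilbert_space_def by blast
  then show ?thesis by simp
qed

locale permutative_rep = k_graph V L r s ident cmp d
  for V :: "'v set" and L :: "'a set" and r s :: "'a \<Rightarrow> 'v" and ident :: "'v \<Rightarrow> 'a"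
    and cmp :: "'a \<Rightarrow> 'a \<Rightarrow> 'a" and d :: "'a \<Rightarrow> ('k::finite \<Rightarrow> nat)" +
  fixes ip :: "'h::ab_group_add \<Rightarrow> 'h \<Rightarrow> complex" and t ta :: "'a \<Rightarrow> 'h \<Rightarrow> 'h"
    and I :: "'i set" and e :: "'i \<Rightarrow> 'h" and J K :: "'a \<Rightarrow> 'i set" and sig :: "'a \<Rightarrow> 'i \<Rightarrow> 'i"
  assumes permutative: "permutative L r s cmp d ip t ta I e J K sig"
    and ip_zero: "ip 0 0 = 0"
begin

lemma J_K_bij: "lam \<in> L \<Longrightarrow> J lam \<subseteq> I \<and> K lam \<subseteq> I \<and> bij_betw (sig lam) (J lam) (K lam)"
  using permutative by (simp add: permutative_def)

lemma K_cover: "(\<Union>lam\<in>{lam\<in>L. d lam = n}. K lam) = I"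
  using permutative by (simp add: permutative_def)

lemma sig_cmp:
  "lam \<in> L \<Longrightarrow> nu \<in> L \<Longrightarrow> s lam = r nu \<Longrightarrow>
   K nu \<subseteq> J lam \<and> J (cmp lam nu) = J nu \<and> (\<forall>i\<in>J nu. sig lam (sig nu i) = sig (cmp lam nu) i)"
  using permutative by (simp add: permutative_def)

lemma K_eq_image: "lam \<in> L \<Longrightarrow> K lam = sig lam ` J lam"
  using J_K_bij by (simp add: bij_betw_def)

lemma basis_nonzero:
  assumes "i \<in> I"
  shows "e i \<noteq> 0"
proof
  assume "e i = 0"
  moreover have "ip (e i) (e i) = 1"
    using permutative assms by (simp add: permutative_def orthonormal_basis_def)
  ultimately show False using ip_zero by simp
qed

lemma adjoint_sig: "lam \<in> L \<Longrightarrow> i \<in> J lam \<Longrightarrow> ta lam (e (sig lam i)) = e i"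
  using permutative by (simp add: permutative_def)

lemma adjoint_K_other:
  "lam \<in> L \<Longrightarrow> lam' \<in> L \<Longrightarrow> lam' \<noteq> lam \<Longrightarrow> d lam' = d lam \<Longrightarrow> j \<in> K lam' \<Longrightarrow> ta lam (e j) = 0"
  using permutative by (simp add: permutative_def)

lemma K_disjoint:
  assumes "lam \<in> L" "lam' \<in> L" "d lam = d lam'" "i \<in> K lam" "i \<in> K lam'"
  shows "lam = lam'"
proof (rule ccontr)
  assume "lam \<noteq> lam'"
  have "i \<in> sig lam ` J lam" using K_eq_image[OF assms(1)] assms(4) by simp
  then obtain a where a: "a \<in> J lam" "sig lam a = i" by blast
  have "e a = ta lam (e i)"
    using adjoint_sig[OF assms(1) a(1)] a(2) by simp
  also have "\<dots> = 0"
    using adjoint_K_other[OF assms(1,2) _ _ assms(5)] \<open>lam \<noteq> lam'\<close> assms(3) by simp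
  finally have "e a = 0" .
  moreover have "a \<in> I" using J_K_bij[OF assms(1)] a(1) by blast
  ultimately show False using basis_nonzero by simp
qed

definition initial_segment :: "('k \<Rightarrow> nat) \<Rightarrow> 'i \<Rightarrow> 'a" where
  "initial_segment n i = (THE lam. lam \<in> L \<and> d lam = n \<and> i \<in> K lam)"

lemma initial_segment_eq: "lam \<in> L \<Longrightarrow> d lam = n \<Longrightarrow> i \<in> K lam \<Longrightarrow> initial_segment n i = lam"
  unfolding initial_segment_def by (rule the_equality) (auto intro: K_disjoint)

lemma initial_segment_props:
  assumes "i \<in> I"
  shows "initial_segment n i \<in> L \<and> d (initial_segment n i) = n \<and> i \<in> K (initial_segment n i)"
proof -
  from K_cover[of n] assms obtain lam where "lam \<in> L" "d lam = n" "i \<in> K lam" by blast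
  then show ?thesis using initial_segment_eq by simp
qed

lemma K_cmp:
  assumes "lam \<in> L" "nu \<in> L" "s lam = r nu"
  shows "K (cmp lam nu) = sig lam ` K nu"
proof -
  have "K (cmp lam nu) = sig (cmp lam nu) ` J nu"
    using K_eq_image cmp_props sig_cmp assms by auto
  also have "\<dots> = sig lam ` sig nu ` J nu"
    using sig_cmp[OF assms] by (force simp: image_image)
  finally show ?thesis using K_eq_image[OF assms(2)] by simp
qed

lemma initial_segment_factor:
  assumes i: "i \<in> I" and pq: "p \<le> q"
  shows "\<exists>nu\<in>L. s (initial_segment p i) = r nu \<and> initial_segment q i = cmp (initial_segment p i) nu
           \<and> d nu = (\<lambda>j. q j - p j)"
proof -
  have q: "initial_segment q i \<in> L" "d (initial_segment q i) = (\<lambda>j. p j + (q j - p j))"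
    using initial_segment_props[OF i] pq by (auto simp: le_fun_def)
  obtain mu nu where mn: "mu \<in> L" "nu \<in> L" "s mu = r nu" "initial_segment q i = cmp mu nu"
      "d mu = p" "d nu = (\<lambda>j. q j - p j)"
    using factorisation_exists[OF q] by blast
  have "i \<in> sig mu ` K nu" using K_cmp[OF mn(1-3)] mn(4) initial_segment_props[OF i, of q] by simp
  also have "\<dots> \<subseteq> K mu" using sig_cmp[OF mn(1-3)] K_eq_image[OF mn(1)] by (simp add: image_mono)
  finally have "initial_segment p i = mu" using initial_segment_eq[OF mn(1) mn(5)] by simp
  then show ?thesis using mn by blast
qed

definition segment_path :: "'i \<Rightarrow> ('k \<Rightarrow> nat) \<Rightarrow> ('k \<Rightarrow> nat) \<Rightarrow> 'a" where
  "segment_path i p q = (if p \<le> q then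
     THE nu. nu \<in> L \<and> s (initial_segment p i) = r nu \<and> initial_segment q i = cmp (initial_segment p i) nu
       \<and> d nu = (\<lambda>j. q j - p j)
   else undefined)"

lemma segment_path_unique:
  assumes i: "i \<in> I" and pq: "p \<le> q"
    and nu: "nu \<in> L" "s (initial_segment p i) = r nu" "initial_segment q i = cmp (initial_segment p i) nu"
      "d nu = (\<lambda>j. q j - p j)"
  shows "segment_path i p q = nu"
proof -
  have "nu' = nu" if "nu' \<in> L \<and> s (initial_segment p i) = r nu' \<and>
      initial_segment q i = cmp (initial_segment p i) nu' \<and> d nu' = (\<lambda>j. q j - p j)" for nu'
    using factorisation_unique[of "initial_segment p i" nu' "initial_segment p i" nu]
      that nu initial_segment_props[OF i]
    by simp
  then show ?thesis
    unfolding segment_path_def using pq nu by (simp add: the_equality)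
qed

lemma segment_path_props:
  assumes i: "i \<in> I" and pq: "p \<le> q"
  shows "segment_path i p q \<in> L \<and> s (initial_segment p i) = r (segment_path i p q) \<and>
    initial_segment q i = cmp (initial_segment p i) (segment_path i p q) \<and>
    d (segment_path i p q) = (\<lambda>j. q j - p j)"
  using initial_segment_factor[OF i pq] segment_path_unique[OF i pq] by metis

lemma segment_path_zero:
  assumes i: "i \<in> I"
  shows "segment_path i (\<lambda>_. 0) n = initial_segment n i"
proof -
  let ?mu = "initial_segment (\<lambda>_. 0) i" and ?lam = "initial_segment n i"
    and ?x = "segment_path i (\<lambda>_. 0) n"
  have mu: "?mu \<in> L" "d ?mu = (\<lambda>_. 0)" and lam: "?lam \<in> L" "d ?lam = n"
    using initial_segment_props[OF i] by blast+
  have x: "?x \<in> L" "s ?mu = r ?x" "?lam = cmp ?mu ?x" "d ?x = (\<lambda>j. n j - 0)"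
    using segment_path_props[OF i const_zero_le] by blast+
  have "r ?lam \<in> V" using range_source_in[OF lam(1)] by blast
  then have id: "ident (r ?lam) \<in> L" "s (ident (r ?lam)) = r ?lam" "d (ident (r ?lam)) = (\<lambda>_. 0)"
    using ident_props by blast+
  have "cmp ?mu ?x = cmp (ident (r ?lam)) ?lam"
    unfolding x(3)[symmetric] using cmp_ident[OF lam(1)] by simp
  from factorisation_unique[OF mu(1) x(1) id(1) lam(1) x(2) id(2) this] show ?thesis
    using mu(2) id(3) x(4) lam(2) by simp
qed

lemma segment_path_in_paths:
  assumes i: "i \<in> I"
  shows "segment_path i \<in> paths"
  unfolding inf_paths_def mem_Collect_eq
proof (intro conjI allI impI)
  fix p q :: "'k \<Rightarrow> nat" assume "p \<le> q"
  then show "segment_path i p q \<in> L" "d (segment_path i p q) = (\<lambda>j. q j - p j)"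
    using segment_path_props[OF i] by auto
next
  fix p :: "'k \<Rightarrow> nat"
  let ?lam = "initial_segment p i"
  have lam: "?lam \<in> L" "d ?lam = p" using initial_segment_props[OF i] by auto
  have v: "s ?lam \<in> V" using range_source_in[OF lam(1)] by blast
  have "segment_path i p p = ident (s ?lam)"
    using segment_path_unique[OF i order_refl] ident_props[OF v] cmp_ident[OF lam(1)] by simp
  then show "segment_path i p p = ident (r (segment_path i p p))"
    using ident_props[OF v] by simp
next
  fix p q w :: "'k \<Rightarrow> nat" assume "p \<le> q \<and> q \<le> w"
  then have pq: "p \<le> q" and qw: "q \<le> w" and pw: "p \<le> w" by auto
  let ?lam = "initial_segment p i" and ?x = "segment_path i p q" and ?y = "segment_path i q w"
  have lam: "?lam \<in> L" using initial_segment_props[OF i] by blast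
  have x: "?x \<in> L" "s ?lam = r ?x" "initial_segment q i = cmp ?lam ?x" "d ?x = (\<lambda>j. q j - p j)"
    using segment_path_props[OF i pq] by auto
  have y: "?y \<in> L" "s (initial_segment q i) = r ?y" "initial_segment w i = cmp (initial_segment q i) ?y"
      "d ?y = (\<lambda>j. w j - q j)"
    using segment_path_props[OF i qw] by auto
  show xy: "s ?x = r ?y"
    using y(2) x(3) cmp_props[OF lam x(1,2)] by simp
  have "initial_segment w i = cmp ?lam (cmp ?x ?y)"
    using y(3) x(3) cmp_assoc[OF lam x(1) y(1) x(2) xy] by simp
  moreover have "d (cmp ?x ?y) = (\<lambda>j. w j - p j)"
    using cmp_props[OF x(1) y(1) xy] x(4) y(4) pq qw by (auto simp: le_fun_def)
  ultimately show "segment_path i p w = cmp ?x ?y"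
    using segment_path_unique[OF i pw] cmp_props[OF x(1) y(1) xy] x(2) by simp
next
  fix p q :: "'k \<Rightarrow> nat" assume "\<not> p \<le> q"
  then show "segment_path i p q = undefined" by (simp add: segment_path_def)
qed

abbreviation E where "E \<equiv> encoding L r s ident cmp d K"

lemma encoding_eq_segment_path:
  assumes i: "i \<in> I"
  shows "E i = segment_path i"
  unfolding encoding_def initial_segment_def[symmetric]
proof (rule the_equality)
  show "segment_path i \<in> paths \<and> (\<forall>n. segment_path i (\<lambda>_. 0) n = initial_segment n i)"
    using segment_path_in_paths[OF i] segment_path_zero[OF i] by blast
  fix x assume "x \<in> paths \<and> (\<forall>n. x (\<lambda>_. 0) n = initial_segment n i)"
  then show "x = segment_path i"
    using inf_paths_eqI segment_path_in_paths[OF i] segment_path_zero[OF i] by metis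
qed

lemma encoding_in_paths: "i \<in> I \<Longrightarrow> E i \<in> paths"
  using encoding_eq_segment_path segment_path_in_paths by simp

lemma encoding_initial: "i \<in> I \<Longrightarrow> E i (\<lambda>_. 0) n = initial_segment n i"
  using encoding_eq_segment_path segment_path_zero by simp

lemma sig_in_K: "lam \<in> L \<Longrightarrow> i \<in> J lam \<Longrightarrow> sig lam i \<in> K lam"
  using K_eq_image by blast

text \<open>E(sig lam i)(0, d lam + n) = lam nu with sig lam i in K (lam nu) = sig lam ` K nu;
injectivity of sig lam on J lam then puts i itself in K nu, i.e. E(i)(0,n) = nu.\<close>

lemma encoding_sig:
  assumes lam: "lam \<in> L" and i: "i \<in> J lam"
  shows "E (sig lam i) (\<lambda>_. 0) (d lam) = lam" and "path_shift (d lam) (E (sig lam i)) = E i"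
proof -
  let ?j = "sig lam i"
  have jK: "?j \<in> K lam" using sig_in_K[OF lam i] .
  have jI: "?j \<in> I" and iI: "i \<in> I" using J_K_bij[OF lam] i jK by auto
  show lam_init: "E ?j (\<lambda>_. 0) (d lam) = lam"
    using encoding_initial[OF jI] initial_segment_eq[OF lam refl jK] by simp
  have "path_shift (d lam) (E ?j) (\<lambda>_. 0) n = E i (\<lambda>_. 0) n" for n
  proof -
    let ?w = "\<lambda>k. n k + d lam k" and ?nu = "E ?j (d lam) (\<lambda>k. n k + d lam k)"
    have le: "d lam \<le> ?w" by (auto simp: le_fun_def)
    have nu: "s lam = r ?nu" "E ?j (\<lambda>_. 0) ?w = cmp lam ?nu" "?nu \<in> L" "d ?nu = n"
      using inf_path_cmp[OF encoding_in_paths[OF jI] const_zero_le le] lam_init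
        inf_path_segment[OF encoding_in_paths[OF jI] le] by auto
    have "?j \<in> K (cmp lam ?nu)"
      using nu(2) encoding_initial[OF jI, of ?w] initial_segment_props[OF jI, of ?w] by simp
    then obtain i' where i': "i' \<in> K ?nu" "?j = sig lam i'"
      using K_cmp[OF lam nu(3) nu(1)] by auto
    have "i' \<in> J lam" using sig_cmp[OF lam nu(3) nu(1)] i'(1) by blast
    then have "i' = i"
      using i i'(2) J_K_bij[OF lam] by (metis bij_betw_def inj_onD)
    then have "initial_segment n i = ?nu"
      using initial_segment_eq[OF nu(3,4)] i'(1) by simp
    then show ?thesis
      using encoding_initial[OF iI] by (simp add: path_shift_def const_zero_le)
  qed
  then show "path_shift (d lam) (E ?j) = E i"
    using inf_paths_eqI[OF path_shift_in_paths[OF encoding_in_paths[OF jI]] encoding_in_paths[OF iI]]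
    by blast
qed

lemma path_prefix_encoding:
  "lam \<in> L \<Longrightarrow> i \<in> J lam \<Longrightarrow> path_prefix L r s ident cmp d lam (E i) = E (sig lam i)"
  using path_prefix_eqI encoding_sig encoding_in_paths sig_in_K J_K_bij by blast

lemma coding_sig:
  assumes lam: "lam \<in> L" and i: "i \<in> J lam"
  shows "coding L d J K sig (d lam) (sig lam i) = i"
proof -
  have "initial_segment (d lam) (sig lam i) = lam"
    using initial_segment_eq[OF lam refl sig_in_K[OF lam i]] .
  moreover have "inj_on (sig lam) (J lam)"
    using J_K_bij[OF lam] by (simp add: bij_betw_def)
  ultimately show ?thesis
    unfolding coding_def Let_def initial_segment_def[symmetric]
    using i by (auto intro!: the_equality dest: inj_onD)
qed

lemma path_shift_encoding:
  assumes i: "i \<in> I"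
  shows "coding L d J K sig n i \<in> I \<and> path_shift n (E i) = E (coding L d J K sig n i)"
proof -
  let ?lam = "initial_segment n i"
  have lam: "?lam \<in> L" "d ?lam = n" "i \<in> K ?lam" using initial_segment_props[OF i] by blast+
  then obtain i' where i': "i' \<in> J ?lam" "i = sig ?lam i'" using K_eq_image by blast
  then have "coding L d J K sig n i = i'" using coding_sig[OF lam(1) i'(1)] i'(2) lam(2) by simp
  moreover have "path_shift n (E i) = E i'" using encoding_sig(2)[OF lam(1) i'(1)] i'(2) lam(2) by simp
  ultimately show ?thesis using J_K_bij[OF lam(1)] i'(1) by auto
qed

end

theorem corollary4p4:
  fixes V :: "'v set" and L :: "'a set" and r s :: "'a \<Rightarrow> 'v" and ident :: "'v \<Rightarrow> 'a"
    and cmp :: "'a \<Rightarrow> 'a \<Rightarrow> 'a" and d :: "'a \<Rightarrow> ('k::finite \<Rightarrow> nat)"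
    and sc :: "complex \<Rightarrow> 'h::ab_group_add \<Rightarrow> 'h" and ip :: "'h \<Rightarrow> 'h \<Rightarrow> complex"
    and t ta :: "'a \<Rightarrow> 'h \<Rightarrow> 'h"
    and I :: "'i set" and e :: "'i \<Rightarrow> 'h" and J K :: "'a \<Rightarrow> 'i set" and sig :: "'a \<Rightarrow> 'i \<Rightarrow> 'i"
  assumes "kgraph V L r s ident cmp d"
    and "row_finite V L r d"
    and "no_sources V L r d"
    and "complex_hilbert_space sc ip"
    and "ck_rep V L r s ident cmp d sc ip t ta"
    and "permutative L r s cmp d ip t ta I e J K sig"
    and "inj_on (encoding L r s ident cmp d K) I"
  shows "(\<forall>lam\<in>L. \<forall>i\<in>J lam.
            inv_into I (encoding L r s ident cmp d K)
              (path_prefix L r s ident cmp d lam (encoding L r s ident cmp d K i)) = sig lam i) \<and>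
         (\<forall>n. \<forall>i\<in>I.
            inv_into I (encoding L r s ident cmp d K)
              (path_shift n (encoding L r s ident cmp d K i)) = coding L d J K sig n i)"
proof -
  interpret permutative_rep V L r s ident cmp d ip t ta I e J K sig
    using assms(1,4,6) complex_hilbert_space_ip_zero by unfold_locales
  have "sig lam i \<in> I" if "lam \<in> L" "i \<in> J lam" for lam i
    using sig_in_K[OF that] J_K_bij[OF that(1)] by blast
  then show ?thesis
    using path_prefix_encoding path_shift_encoding inv_into_f_f[OF assms(7)] by simp
qed

end
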